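(* Let $X\in\mathbb{R}^{n\times n}$ be a matrix all of whose entries are non-zero. Then the appraisal network $G(X)$ satisfies social balance if and only if (S1) $X_{ii}>0$ for every $i\in\{1,\dots,n\}$, and (S3) $\operatorname{sign}(X_{i*})=\pm\operatorname{sign}(X_{j*})$ for all $i,j\in\{1,\dots,n\}$. Moreover, if $G(X)$ satisfies social balance, then $X$ is sign-symmetric, i.e., $\operatorname{sign}(X)=\operatorname{sign}(X)^{\top}$.
   Context: For a matrix $X$, $X_{i*}$ denotes its $i$-th row and $\operatorname{sign}(X)$ is the entry-wise sign ($1$ for positive, $-1$ for negative, $0$ for zero entries). $G(X)$ is the weighted digraph with (possibly negative) adjacency matrix $X$. $G(X)$ satisfies social balance (is structurally balanced) if (S1) $X_{ii}>0$ for all $i$, and (S2) $\operatorname{sign}(X_{ij})\operatorname{sign}(X_{jk})\operatorname{sign}(X_{ki})=1$ for all $i,j,k\in\{1,\dots,n\}$. *)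

theory Defs
  imports "HOL-Analysis.Analysis"
begin

definition sign_mat :: "real^'n^'m \<Rightarrow> real^'n^'m" where
  "sign_mat X = (\<chi> i j. sgn (X $ i $ j))"

definition social_balance :: "real^'n^'n \<Rightarrow> bool" where
  "social_balance X \<longleftrightarrow>
     (\<forall>i. X $ i $ i > 0) \<and>
     (\<forall>i j k. sgn (X $ i $ j) * sgn (X $ j $ k) * sgn (X $ k $ i) = 1)"

end

theory Submission
  imports Defs
begin

text \<open>A sign pattern with positive diagonal is balanced exactly when it splits the agents into
  two factions, i.e. factors as s i j = v i * v j with v i = \<plusminus>1 (take v i = s i r for a fixed
  reference agent r). Such a factorisation is visibly symmetric, and row i is v i times the
  vector v, so any two rows agree up to a global sign. Conversely, rows agreeing up to sign
  together with ones on the diagonal force the same factorisation.\<close>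

definition two_faction :: "('a \<Rightarrow> 'a \<Rightarrow> real) \<Rightarrow> bool" where
  "two_faction s \<longleftrightarrow> (\<exists>v. (\<forall>i. v i = 1 \<or> v i = -1) \<and> (\<forall>i j. s i j = v i * v j))"

lemma two_faction_diag:
  assumes "two_faction s"
  shows "s i i = 1"
  using assms by (auto simp: two_faction_def) (metis mult_1 mult_minus1 minus_minus)

lemma two_faction_triangle:
  assumes "two_faction s"
  shows "s i j * s j k * s k i = 1"
proof -
  obtain v where v: "\<And>i. v i = 1 \<or> v i = -1" "\<And>i j. s i j = v i * v j"
    using assms unfolding two_faction_def by blast
  have sq: "v i * v i = 1" for i
    using v(1)[of i] by auto
  have "s i j * s j k * s k i = (v i * v i) * (v j * v j) * (v k * v k)"
    unfolding v(2) by (simp only: mult_ac)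
  then show ?thesis
    by (simp only: sq mult_1)
qed

lemma two_faction_sym:
  assumes "two_faction s"
  shows "s i j = s j i"
  using assms by (auto simp: two_faction_def mult.commute)

lemma two_faction_rows:
  assumes "two_faction s"
  shows "(\<forall>k. s i k = s j k) \<or> (\<forall>k. s i k = - s j k)"
proof -
  obtain v where v: "\<And>i. v i = 1 \<or> v i = -1" "\<And>i j. s i j = v i * v j"
    using assms unfolding two_faction_def by blast
  show ?thesis
    using v(1)[of i] v(1)[of j] by (auto simp: v(2))
qed

lemma balanced_imp_two_faction:
  assumes pm: "\<And>i j. s i j = 1 \<or> s i j = -1"
    and diag: "\<And>i. s i i = 1"
    and triangle: "\<And>i j k. s i j * s j k * s k i = 1"
  shows "two_faction s"
proof -
  fix r
  have symmetric: "s i j = s j i" for i j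
    using triangle[of i j i] diag[of i] pm[of i j] pm[of j i] by auto
  have "s i j = s i r * s j r" for i j
    using triangle[of i r j] symmetric[of j i] symmetric[of r j] pm[of i r] pm[of r j] pm[of i j]
    by auto
  then show ?thesis
    unfolding two_faction_def using pm by (intro exI[of _ "\<lambda>i. s i r"]) blast
qed

lemma rows_up_to_sign_imp_two_faction:
  assumes diag: "\<And>i. s i i = 1"
    and rows: "\<And>i j. (\<forall>k. s i k = s j k) \<or> (\<forall>k. s i k = - s j k)"
  shows "two_faction s"
proof -
  fix r
  have pm: "s i r = 1 \<or> s i r = -1" for i
    using rows[of i r] diag[of r] by auto
  have symmetric: "s r k = s k r" for k
    using rows[of k r] diag[of k] diag[of r] by force
  have "s i k = s i r * s k r" for i k
    using rows[of i r] diag[of r] symmetric[of k] by auto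
  then show ?thesis
    unfolding two_faction_def using pm by (intro exI[of _ "\<lambda>i. s i r"]) blast
qed

theorem lemma2p2:
  fixes X :: "real^'n^'n"
  assumes nz: "\<forall>i j. X $ i $ j \<noteq> 0"
  shows "(social_balance X \<longleftrightarrow>
           ((\<forall>i. X $ i $ i > 0) \<and>
            (\<forall>i j. sign_mat X $ i = sign_mat X $ j \<or> sign_mat X $ i = - (sign_mat X $ j))))
         \<and> (social_balance X \<longrightarrow> sign_mat X = transpose (sign_mat X))"
proof -
  define s where "s i j = sign_mat X $ i $ j" for i j
  have pm: "s i j = 1 \<or> s i j = -1" for i j
    using nz by (simp add: s_def sign_mat_def sgn_real_def)
  have diag_iff: "X $ i $ i > 0 \<longleftrightarrow> s i i = 1" for i
    by (simp add: s_def sign_mat_def sgn_1_pos)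
  have balance_iff: "social_balance X \<longleftrightarrow>
      (\<forall>i. s i i = 1) \<and> (\<forall>i j k. s i j * s j k * s k i = 1)"
    by (simp add: social_balance_def diag_iff) (simp add: s_def sign_mat_def)
  have rows_iff: "sign_mat X $ i = sign_mat X $ j \<or> sign_mat X $ i = - (sign_mat X $ j) \<longleftrightarrow>
      (\<forall>k. s i k = s j k) \<or> (\<forall>k. s i k = - s j k)" for i j
    by (simp add: s_def vec_eq_iff)
  have "social_balance X \<longleftrightarrow> two_faction s"
    unfolding balance_iff
    using balanced_imp_two_faction[of s, OF pm] two_faction_diag two_faction_triangle
    by (intro iffI) auto
  moreover have "(\<forall>i. X $ i $ i > 0) \<and>
      (\<forall>i j. sign_mat X $ i = sign_mat X $ j \<or> sign_mat X $ i = - (sign_mat X $ j))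
      \<longleftrightarrow> two_faction s"
    unfolding diag_iff rows_iff
    using rows_up_to_sign_imp_two_faction[of s] two_faction_diag[of s] two_faction_rows[of s]
    by (intro iffI) auto
  moreover have "sign_mat X = transpose (sign_mat X)" if "two_faction s"
  proof -
    have "sign_mat X $ i $ j = sign_mat X $ j $ i" for i j
      using two_faction_sym[OF that] unfolding s_def .
    then show ?thesis
      by (simp add: vec_eq_iff transpose_def)
  qed
  ultimately show ?thesis by blast
qed

end
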